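(* The $2$-dimensional Fine $\mathbb{Q}$-codegree spectrum is $$S^F(2)=\left\{\tfrac{2}{k}\;\middle|\;k\in\mathbb{Z}_{>0}\right\}\cup\left\{\tfrac{3}{k}\;\middle|\;k\in\mathbb{Z}_{>0}\right\}.$$
   Context: For a $d$-dimensional rational polytope $P\subseteq\mathbb{R}^d$ and $a\in(\mathbb{Z}^d)^*$ let $h_P(a)=\min_{x\in P}\langle a,x\rangle$. For $s>0$ the Fine adjoint polytope is $P^{F(s)}=\{x\in\mathbb{R}^d : \langle a,x\rangle\ge h_P(a)+s \text{ for all } a\in(\mathbb{Z}^d)^*\setminus\{0\}\}$. The Fine $\mathbb{Q}$-codegree is $\mu^F(P)=(\sup\{s>0 : P^{F(s)}\neq\emptyset\})^{-1}$. The Fine spectrum in dimension $d$ is $S^F(d)=\{\mu^F(P) : P \text{ a } d\text{-dimensional lattice polytope}\}$, lattice polytopes being those with vertices in $\mathbb{Z}^d$. *)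

theory Defs
  imports "HOL-Analysis.Analysis"
begin

text \<open>Points of R^d are vectors of type real^'n (d = CARD('n)); the dual lattice
  (Z^d)* is identified with the integer vectors, paired via the inner product.\<close>

definition lattice_point :: "real^'n \<Rightarrow> bool" where
  "lattice_point x \<longleftrightarrow> (\<forall>i. x $ i \<in> \<int>)"

definition lattice_polytope :: "(real^'n) set \<Rightarrow> bool" where
  "lattice_polytope P \<longleftrightarrow>
     (\<exists>V. finite V \<and> V \<noteq> {} \<and> (\<forall>v\<in>V. lattice_point v) \<and> P = convex hull V)"

definition support_min :: "(real^'n) set \<Rightarrow> real^'n \<Rightarrow> real" where
  "support_min P a = Inf ((\<lambda>x. a \<bullet> x) ` P)"

definition fine_adjoint :: "(real^'n) set \<Rightarrow> real \<Rightarrow> (real^'n) set" where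
  "fine_adjoint P s = {x. \<forall>a. lattice_point a \<and> a \<noteq> 0 \<longrightarrow> a \<bullet> x \<ge> support_min P a + s}"

definition fine_codegree :: "(real^'n) set \<Rightarrow> real" where
  "fine_codegree P = inverse (Sup {s. s > 0 \<and> fine_adjoint P s \<noteq> {}})"

definition fine_spectrum :: "'n::finite itself \<Rightarrow> real set" where
  "fine_spectrum (_ :: 'n itself) =
     {fine_codegree P | P :: (real^'n) set. lattice_polytope P \<and> aff_dim P = int CARD('n)}"

end

theory Submission
  imports Defs
begin

text \<open>Let \<open>h\<close> be the support function of a lattice polygon. For a finite set \<open>N\<close> of nonzero
  lattice vectors, the largest margin \<open>s\<close> such that some point \<open>x\<close> satisfies
  \<open>a \<bullet> x \<ge> h a + s\<close> for all \<open>a \<in> N\<close> is attained, and at an optimal \<open>x\<close> the tight vectors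
  (those with equality) have 0 in their convex hull. The slack \<open>a \<bullet> x - h a\<close> is sublinear in \<open>a\<close>,
  so a lattice point in the half-open parallelogram spanned by two tight vectors with determinant at
  least 2 lies on the segment between them and is tight again. This shrinks any tight triangle around
  the origin to a unimodular one, and then either \<open>u\<close> and \<open>-u\<close> are both tight, giving
  \<open>2 s = - (h u + h (-u)) \<in> \<int>\<close>, or three tight vectors sum to 0, giving \<open>3 s \<in> \<int>\<close>.
  As \<open>N\<close> runs through the short lattice vectors of growing boxes, these optimal margins decrease in
  \<open>\<int>/6\<close>, hence stabilise, and by compactness the limit is the largest Fine margin, the inverse of
  the Fine codegree. The triangle with vertices \<open>0, k e\<^sub>1, k e\<^sub>2\<close> and the square \<open>[0,k]\<^sup>2\<close> realise
  \<open>3/k\<close> and \<open>2/k\<close>.\<close>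

section \<open>Lattice points and support functions\<close>

lemma lattice_point_add: "lattice_point a \<Longrightarrow> lattice_point b \<Longrightarrow> lattice_point (a + b)"
  and lattice_point_diff: "lattice_point a \<Longrightarrow> lattice_point b \<Longrightarrow> lattice_point (a - b)"
  and lattice_point_uminus: "lattice_point a \<Longrightarrow> lattice_point (- a)"
  by (simp_all add: lattice_point_def)

lemma lattice_point_int_comb:
  "lattice_point a \<Longrightarrow> lattice_point b \<Longrightarrow> x \<in> \<int> \<Longrightarrow> y \<in> \<int> \<Longrightarrow> lattice_point (x *\<^sub>R a + y *\<^sub>R b)"
  by (simp add: lattice_point_def)

lemma lattice_point_inner_Ints: "lattice_point a \<Longrightarrow> lattice_point b \<Longrightarrow> a \<bullet> b \<in> \<int>"
  unfolding lattice_point_def inner_vec_def by (auto intro!: Ints_sum)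

lemma norm_ge_1_if_lattice_point:
  assumes "lattice_point a" "a \<noteq> 0"
  shows "1 \<le> norm a"
proof -
  obtain i where "a $ i \<noteq> 0" using assms(2) by (metis vec_eq_iff zero_index)
  then have "1 \<le> \<bar>a $ i\<bar>" using assms(1) Ints_nonzero_abs_ge1 unfolding lattice_point_def by blast
  then show ?thesis using component_le_norm_cart[of a i] by linarith
qed

locale lattice_vertices =
  fixes V :: "(real^'n) set"
  assumes finite_vertices: "finite V" and vertices_nonempty: "V \<noteq> {}"
    and lattice_point_vertices: "\<And>v. v \<in> V \<Longrightarrow> lattice_point v"
begin

lemma support_min_eq_vertex: "\<exists>v\<in>V. support_min (convex hull V) a = a \<bullet> v"
proof -
  obtain v where v: "v \<in> V" "\<And>w. w \<in> V \<Longrightarrow> a \<bullet> v \<le> a \<bullet> w"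
    using finite_vertices vertices_nonempty by (metis (no_types, lifting) finite_imageI Min_in Min_le empty_is_image imageE image_eqI)
  have "convex hull V \<subseteq> {y. a \<bullet> v \<le> a \<bullet> y}"
    by (rule hull_minimal) (use v convex_halfspace_ge[of "a \<bullet> v" a] in \<open>auto simp: inner_commute\<close>)
  then have "support_min (convex hull V) a = a \<bullet> v"
    unfolding support_min_def by (intro cInf_eq_minimum) (use v(1) hull_inc[of v V] in auto)
  with v(1) show ?thesis by blast
qed

lemma support_min_le:
  assumes "y \<in> convex hull V"
  shows "support_min (convex hull V) a \<le> a \<bullet> y"
proof -
  have "bounded (convex hull V)"
    by (simp add: compact_imp_bounded finite_imp_compact_convex_hull finite_vertices)
  then have "bdd_below ((\<lambda>x. x \<bullet> a) ` (convex hull V))" by (rule bounded_inner_imp_bdd_below)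
  then show ?thesis unfolding support_min_def using assms by (simp add: inner_commute cInf_lower)
qed

lemma support_min_le_vertex: "v \<in> V \<Longrightarrow> support_min (convex hull V) a \<le> a \<bullet> v"
  by (rule support_min_le[OF hull_inc])

lemma support_min_scaleR:
  assumes "0 \<le> t"
  shows "support_min (convex hull V) (t *\<^sub>R a) = t * support_min (convex hull V) a"
proof -
  obtain v where v: "v \<in> V" "support_min (convex hull V) a = a \<bullet> v"
    using support_min_eq_vertex by blast
  obtain w where w: "w \<in> V" "support_min (convex hull V) (t *\<^sub>R a) = (t *\<^sub>R a) \<bullet> w"
    using support_min_eq_vertex by blast
  have "support_min (convex hull V) (t *\<^sub>R a) \<le> t * support_min (convex hull V) a"
    using support_min_le_vertex[OF v(1), of "t *\<^sub>R a"] v(2) by simp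
  moreover have "t * support_min (convex hull V) a \<le> support_min (convex hull V) (t *\<^sub>R a)"
    using mult_left_mono[OF support_min_le_vertex[OF w(1), of a] assms] w(2) by simp
  ultimately show ?thesis by linarith
qed

lemma support_min_add:
  "support_min (convex hull V) a + support_min (convex hull V) b \<le> support_min (convex hull V) (a + b)"
proof -
  obtain w where "w \<in> V" "support_min (convex hull V) (a + b) = (a + b) \<bullet> w"
    using support_min_eq_vertex by blast
  then show ?thesis
    using support_min_le_vertex[of w a] support_min_le_vertex[of w b] by (simp add: inner_add_left)
qed

lemma support_min_Ints: "lattice_point a \<Longrightarrow> support_min (convex hull V) a \<in> \<int>"
  by (metis lattice_point_inner_Ints lattice_point_vertices support_min_eq_vertex)

lemma support_min_ge:
  "(\<And>v. v \<in> V \<Longrightarrow> c \<le> a \<bullet> v) \<Longrightarrow> c \<le> support_min (convex hull V) a"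
  using support_min_eq_vertex by metis

end

lemma lattice_polytope_iff: "lattice_polytope P \<longleftrightarrow> (\<exists>V. lattice_vertices V \<and> P = convex hull V)"
  unfolding lattice_polytope_def lattice_vertices_def by blast

section \<open>Determinants and lattice parallelograms\<close>

definition det2 :: "real^2 \<Rightarrow> real^2 \<Rightarrow> real" where
  "det2 a b = a$1 * b$2 - a$2 * b$1"

lemma vec2_eq_iff: "(a::real^2) = b \<longleftrightarrow> a$1 = b$1 \<and> a$2 = b$2"
  by (simp add: vec_eq_iff forall_2)

lemma inner_vec2: "(a::real^2) \<bullet> b = a$1 * b$1 + a$2 * b$2"
  by (simp add: inner_vec_def sum_2)

lemma lattice_point_vec2: "lattice_point (a::real^2) \<longleftrightarrow> a$1 \<in> \<int> \<and> a$2 \<in> \<int>"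
  by (simp add: lattice_point_def forall_2)

lemma nonzero_lattice_point_vec2E:
  assumes "lattice_point (a::real^2)" "a \<noteq> 0"
  obtains m1 m2 :: int where "a$1 = m1" "a$2 = m2" "m1 \<noteq> 0 \<or> m2 \<noteq> 0"
proof -
  obtain m1 m2 where "a$1 = of_int m1" "a$2 = of_int m2"
    using assms(1) unfolding lattice_point_vec2 by (metis Ints_cases)
  moreover from this have "m1 \<noteq> 0 \<or> m2 \<noteq> 0" using assms(2) by (auto simp: vec2_eq_iff)
  ultimately show ?thesis by (rule that)
qed

lemma det2_swap: "det2 b a = - det2 a b"
  and det2_self: "det2 a a = 0"
  and det2_zero_left: "det2 0 a = 0"
  and det2_zero_right: "det2 a 0 = 0"
  and det2_add_left: "det2 (a + b) c = det2 a c + det2 b c"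
  and det2_add_right: "det2 c (a + b) = det2 c a + det2 c b"
  and det2_scaleR_left: "det2 (x *\<^sub>R a) c = x * det2 a c"
  and det2_scaleR_right: "det2 c (x *\<^sub>R a) = x * det2 c a"
  by (simp_all add: det2_def algebra_simps)

lemma det2_Ints: "lattice_point a \<Longrightarrow> lattice_point b \<Longrightarrow> det2 a b \<in> \<int>"
  by (simp add: det2_def lattice_point_vec2)

lemma det2_cyclic_sum: "det2 b c *\<^sub>R a + det2 c a *\<^sub>R b + det2 a b *\<^sub>R c = 0"
  by (simp add: vec2_eq_iff det2_def algebra_simps)

lemma scaleR_add_eq_0_if_det2_nonzero:
  assumes "det2 a b \<noteq> 0" "x *\<^sub>R a + y *\<^sub>R b = 0"
  shows "x = 0" "y = 0"
proof -
  have "x * det2 a b = det2 (x *\<^sub>R a + y *\<^sub>R b) b"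
    by (simp add: det2_add_left det2_scaleR_left det2_self)
  then show "x = 0" using assms by (simp add: det2_zero_left)
  have "y * det2 a b = det2 a (x *\<^sub>R a + y *\<^sub>R b)"
    by (simp add: det2_add_right det2_scaleR_right det2_self)
  then show "y = 0" using assms by (simp add: det2_zero_right)
qed

lemma det2_coordinates:
  assumes "det2 a b \<noteq> 0"
  shows "e = (det2 e b / det2 a b) *\<^sub>R a + (det2 a e / det2 a b) *\<^sub>R b"
proof -
  have "e = (1 / det2 a b) *\<^sub>R (det2 a b *\<^sub>R e)" using assms by simp
  also have "det2 a b *\<^sub>R e = det2 e b *\<^sub>R a + det2 a e *\<^sub>R b"
    using det2_cyclic_sum[of e a b] by (simp add: det2_swap[of a e] det2_swap[of b e] algebra_simps)
  finally show ?thesis by (simp add: scaleR_add_right)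
qed

lemma det2_eq_0_imp_parallel:
  assumes "det2 p q = 0"
  shows "(q \<bullet> q) *\<^sub>R p = (p \<bullet> q) *\<^sub>R q"
proof -
  have "(q$1 * q$1 + q$2 * q$2) * p$i = (p$1 * q$1 + p$2 * q$2) * q$i" if "i = 1 \<or> i = 2" for i
    using that assms unfolding det2_def by (auto simp: algebra_simps)
  then show ?thesis by (simp add: vec2_eq_iff inner_vec2)
qed

lemma convex_hull_planar_caratheodory:
  fixes A :: "(real^2) set"
  assumes "x \<in> convex hull A"
  obtains a b c u v w where "a \<in> A" "b \<in> A" "c \<in> A" "0 \<le> u" "0 \<le> v" "0 \<le> w" "u + v + w = 1"
    "u *\<^sub>R a + v *\<^sub>R b + w *\<^sub>R c = x"
proof -
  obtain T where T: "finite T" "T \<subseteq> A" "card T \<le> DIM(real^2) + 1" "x \<in> convex hull T"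
    using caratheodory[of A] assms by blast
  have "T \<noteq> {}" using T(4) by auto
  with T(1) have "0 < card T" by (simp add: card_gt_0_iff)
  with T(3) consider "card T = 1" | "card T = 2" | "card T = 3" by fastforce
  then obtain a b c where abc: "T = {a, b, c}"
  proof cases
    case 1
    then show ?thesis using that by (metis card_1_singletonE insert_absorb2)
  next
    case 2
    then show ?thesis using that by (metis card_2_iff insert_absorb2)
  next
    case 3
    then show ?thesis using that by (metis card_3_iff)
  qed
  have "a \<in> A" "b \<in> A" "c \<in> A" using T(2) abc by auto
  moreover obtain u v w where "0 \<le> u" "0 \<le> v" "0 \<le> w" "u + v + w = 1"
    "u *\<^sub>R a + v *\<^sub>R b + w *\<^sub>R c = x"
    using T(4) unfolding abc convex_hull_3 by force
  ultimately show ?thesis by (rule that)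
qed

text \<open>If the parallelogram contained no lattice point besides 0, every lattice vector would have
  integer coordinates in the basis \<open>a, b\<close>; for the unit vectors this makes \<open>1 / det2 a b\<close> an
  integer.\<close>

lemma lattice_point_in_parallelogram:
  assumes "lattice_point a" "lattice_point b" "2 \<le> det2 a b"
  obtains x y where "0 \<le> x" "x < 1" "0 \<le> y" "y < 1"
    "lattice_point (x *\<^sub>R a + y *\<^sub>R b)" "x *\<^sub>R a + y *\<^sub>R b \<noteq> 0"
proof (cases "\<exists>x y. 0 \<le> x \<and> x < 1 \<and> 0 \<le> y \<and> y < 1 \<and>
    lattice_point (x *\<^sub>R a + y *\<^sub>R b) \<and> x *\<^sub>R a + y *\<^sub>R b \<noteq> 0")
  case True
  then show ?thesis using that by blast
next
  case none: False
  define d where "d = det2 a b"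
  have d: "d \<noteq> 0" using assms(3) d_def by simp
  have coords_Ints: "det2 e b / d \<in> \<int> \<and> det2 a e / d \<in> \<int>" if e: "lattice_point e" for e
  proof -
    define p q where "p = det2 e b / d" and "q = det2 a e / d"
    have "e = p *\<^sub>R a + q *\<^sub>R b" using det2_coordinates[of a b e] d unfolding p_def q_def d_def by simp
    then have "frac p *\<^sub>R a + frac q *\<^sub>R b = e - (of_int \<lfloor>p\<rfloor> *\<^sub>R a + of_int \<lfloor>q\<rfloor> *\<^sub>R b)"
      by (simp add: frac_def algebra_simps)
    also have "lattice_point \<dots>"
      using assms(1,2) e by (intro lattice_point_diff lattice_point_int_comb) auto
    finally have "frac p *\<^sub>R a + frac q *\<^sub>R b = 0"
      using none frac_ge_0 frac_lt_1 by blast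
    then have "frac p = 0" "frac q = 0"
      using scaleR_add_eq_0_if_det2_nonzero d unfolding d_def by blast+
    then show ?thesis unfolding p_def q_def by (simp add: frac_eq_0_iff)
  qed
  have "a$1 / d \<in> \<int>" "a$2 / d \<in> \<int>" "b$1 / d \<in> \<int>" "b$2 / d \<in> \<int>"
    using coords_Ints[of "vector [1, 0]"] coords_Ints[of "vector [0, 1]"]
    by (auto simp: lattice_point_vec2 det2_def minus_divide_left[symmetric])
  then have "(a$1 / d) * (b$2 / d) - (a$2 / d) * (b$1 / d) \<in> \<int>"
    by (intro Ints_diff Ints_mult)
  also have "(a$1 / d) * (b$2 / d) - (a$2 / d) * (b$1 / d) = (a$1 * b$2 - a$2 * b$1) / (d * d)"
    by (simp add: diff_divide_distrib)
  also have "\<dots> = 1 / d" using d unfolding d_def det2_def by simp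
  finally have "1 \<le> \<bar>1 / d\<bar>" using d by (intro Ints_nonzero_abs_ge1) auto
  then show ?thesis using assms(3) unfolding d_def by simp
qed

section \<open>Tight vectors of a planar sublinear function\<close>

definition short_lattice_vector :: "real \<Rightarrow> real^'n \<Rightarrow> bool" where
  "short_lattice_vector R a \<longleftrightarrow> lattice_point a \<and> a \<noteq> 0 \<and> (\<forall>i. \<bar>a $ i\<bar> \<le> R)"

lemma short_lattice_vector_uminus: "short_lattice_vector R a \<Longrightarrow> short_lattice_vector R (- a)"
  by (simp add: short_lattice_vector_def lattice_point_uminus)

lemma short_lattice_vector_convex_comb:
  assumes "short_lattice_vector R a" "short_lattice_vector R b" "0 \<le> x" "0 \<le> y" "x + y \<le> 1"
    and "lattice_point (x *\<^sub>R a + y *\<^sub>R b)" "x *\<^sub>R a + y *\<^sub>R b \<noteq> 0"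
  shows "short_lattice_vector R (x *\<^sub>R a + y *\<^sub>R b)"
proof -
  have "\<bar>x * a $ i + y * b $ i\<bar> \<le> R" for i
  proof -
    have "\<bar>a $ i\<bar> \<le> R" "\<bar>b $ i\<bar> \<le> R" using assms(1,2) unfolding short_lattice_vector_def by auto
    have "\<bar>x * a $ i + y * b $ i\<bar> \<le> x * \<bar>a $ i\<bar> + y * \<bar>b $ i\<bar>"
      using assms(3,4) by (simp add: abs_mult order_trans[OF abs_triangle_ineq])
    also have "\<dots> \<le> x * R + y * R"
      using assms(3,4) \<open>\<bar>a $ i\<bar> \<le> R\<close> \<open>\<bar>b $ i\<bar> \<le> R\<close> by (intro add_mono mult_left_mono)
    also have "\<dots> \<le> 1 * R"
      using mult_right_mono[OF assms(5), of R] \<open>\<bar>a $ i\<bar> \<le> R\<close> by (simp add: distrib_right)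
    finally show ?thesis by simp
  qed
  then show ?thesis using assms(6,7) unfolding short_lattice_vector_def by simp
qed

lemma short_lattice_vector_mono: "short_lattice_vector R a \<Longrightarrow> R \<le> R' \<Longrightarrow> short_lattice_vector R' a"
  unfolding short_lattice_vector_def by (blast intro: order_trans)

lemma finite_short_lattice_vectors: "finite {a :: real^'n. short_lattice_vector R a}"
proof -
  define S where "S = real_of_int ` {-\<lceil>R\<rceil>..\<lceil>R\<rceil>}"
  have "a $ i \<in> S" if "short_lattice_vector R a" for a :: "real^'n" and i
  proof -
    have "a $ i \<in> \<int>" using that by (simp add: short_lattice_vector_def lattice_point_def)
    then obtain z where z: "a $ i = of_int z" by (rule Ints_cases)
    moreover have "\<bar>a $ i\<bar> \<le> R" using that by (simp add: short_lattice_vector_def)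
    ultimately have "z \<in> {-\<lceil>R\<rceil>..\<lceil>R\<rceil>}" by simp linarith
    with z show ?thesis unfolding S_def by blast
  qed
  then have "vec_nth ` {a :: real^'n. short_lattice_vector R a} \<subseteq> (\<Pi>\<^sub>E i \<in> UNIV. S)"
    by (simp add: image_subset_iff PiE_iff)
  moreover have "finite (\<Pi>\<^sub>E i \<in> (UNIV :: 'n set). S)" unfolding S_def by (intro finite_PiE) auto
  ultimately show ?thesis
    by (metis (no_types, lifting) finite_imageD finite_subset inj_on_def vec_nth_inject)
qed

lemma short_lattice_vector_axis:
  assumes "1 \<le> R"
  shows "short_lattice_vector R (axis i 1)" "short_lattice_vector R (- axis i 1)"
proof -
  have "lattice_point (axis i (1::real))" "\<bar>axis i (1::real) $ j\<bar> \<le> R" for j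
    using assms by (simp_all add: lattice_point_def axis_def)
  then show "short_lattice_vector R (axis i 1)"
    by (simp add: short_lattice_vector_def)
  then show "short_lattice_vector R (- axis i 1)" by (rule short_lattice_vector_uminus)
qed

lemma same_sign_if_convex_weights:
  fixes u v w d1 d2 d3 :: real
  assumes "0 \<le> u" "0 \<le> v" "0 \<le> w" "u + v + w = 1"
    and "v * d1 = u * d2" "v * d3 = w * d2" "w * d1 = u * d3"
  shows "(0 \<le> d1 \<and> 0 \<le> d2 \<and> 0 \<le> d3) \<or> (d1 \<le> 0 \<and> d2 \<le> 0 \<and> d3 \<le> 0)"
  using assms by (smt (verit) mult_nonneg_nonneg mult_nonneg_nonpos mult_pos_neg mult_pos_pos zero_less_mult_iff)

abbreviation double_area :: "real^2 \<Rightarrow> real^2 \<Rightarrow> real^2 \<Rightarrow> real" where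
  "double_area a1 a2 a3 \<equiv> det2 a2 a3 + det2 a3 a1 + det2 a1 a2"

text \<open>In this locale \<open>H\<close> stands for the slack \<open>a \<mapsto> a \<bullet> x - support_min P a\<close> of a point \<open>x\<close> that
  has margin at least \<open>s\<close> against all short lattice vectors; the tight vectors are those whose
  constraint is active.\<close>

locale planar_sublinear =
  fixes H :: "real^2 \<Rightarrow> real" and s R :: real
  assumes H_scaleR: "0 \<le> t \<Longrightarrow> H (t *\<^sub>R a) = t * H a"
    and H_add: "H (a + b) \<le> H a + H b"
    and margin_pos: "0 < s"
    and margin_le: "short_lattice_vector R a \<Longrightarrow> s \<le> H a"
begin

definition tight :: "real^2 \<Rightarrow> bool" where
  "tight a \<longleftrightarrow> short_lattice_vector R a \<and> H a = s"

definition tight_zero_sum :: bool where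
  "tight_zero_sum \<longleftrightarrow>
     (\<exists>u. tight u \<and> tight (- u)) \<or> (\<exists>a b c. tight a \<and> tight b \<and> tight c \<and> a + b + c = 0)"

lemma tight_lattice_point: "tight a \<Longrightarrow> lattice_point a"
  and tight_nonzero: "tight a \<Longrightarrow> a \<noteq> 0"
  by (simp_all add: tight_def short_lattice_vector_def)

lemma H_convex_comb_le: "0 \<le> x \<Longrightarrow> 0 \<le> y \<Longrightarrow> H (x *\<^sub>R a + y *\<^sub>R b) \<le> x * H a + y * H b"
  using H_add[of "x *\<^sub>R a" "y *\<^sub>R b"] H_scaleR[of x a] H_scaleR[of y b] by simp

lemma no_lattice_point_below_tight:
  assumes "tight a" "tight b" "0 \<le> x" "0 \<le> y" "x + y < 1"
  shows "\<not> (lattice_point (x *\<^sub>R a + y *\<^sub>R b) \<and> x *\<^sub>R a + y *\<^sub>R b \<noteq> 0)"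
proof
  assume c: "lattice_point (x *\<^sub>R a + y *\<^sub>R b) \<and> x *\<^sub>R a + y *\<^sub>R b \<noteq> 0"
  have "s \<le> H (x *\<^sub>R a + y *\<^sub>R b)"
    using assms c by (intro margin_le short_lattice_vector_convex_comb) (auto simp: tight_def)
  also have "\<dots> \<le> x * H a + y * H b" by (rule H_convex_comb_le[OF assms(3,4)])
  also have "\<dots> = (x + y) * s" using assms(1,2) by (simp add: tight_def distrib_right)
  also have "\<dots> < s" using assms(5) margin_pos by simp
  finally show False by simp
qed

text \<open>Sublinearity confines the lattice point of \<open>lattice_point_in_parallelogram\<close> to the
  diagonal from \<open>a\<close> to \<open>b\<close>, where it is again tight.\<close>

lemma tight_on_segment:
  assumes a: "tight a" and b: "tight b" and det: "2 \<le> det2 a b"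
  obtains x where "0 < x" "x < 1" "tight (x *\<^sub>R a + (1 - x) *\<^sub>R b)"
proof -
  obtain x y where xy: "0 \<le> x" "x < 1" "0 \<le> y" "y < 1"
    and c: "lattice_point (x *\<^sub>R a + y *\<^sub>R b)" "x *\<^sub>R a + y *\<^sub>R b \<noteq> 0"
    using lattice_point_in_parallelogram[OF tight_lattice_point[OF a] tight_lattice_point[OF b] det] .
  have "\<not> x + y < 1" using no_lattice_point_below_tight[OF a b xy(1,3)] c by blast
  moreover have "\<not> x + y > 1"
  proof
    assume "x + y > 1"
    have "(1 - x) *\<^sub>R a + (1 - y) *\<^sub>R b = (a + b) - (x *\<^sub>R a + y *\<^sub>R b)"
      by (simp add: algebra_simps)
    then have "lattice_point ((1 - x) *\<^sub>R a + (1 - y) *\<^sub>R b)"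
      using a b c by (simp add: lattice_point_add lattice_point_diff tight_lattice_point)
    moreover have "(1 - x) *\<^sub>R a + (1 - y) *\<^sub>R b \<noteq> 0"
      using scaleR_add_eq_0_if_det2_nonzero[of a b "1 - x" "1 - y"] det xy by auto
    ultimately show False
      using no_lattice_point_below_tight[OF a b, of "1 - x" "1 - y"] xy \<open>x + y > 1\<close> by auto
  qed
  ultimately have y: "y = 1 - x" by simp
  have short: "short_lattice_vector R (x *\<^sub>R a + y *\<^sub>R b)"
    using a b xy c y by (intro short_lattice_vector_convex_comb) (auto simp: tight_def)
  have "H (x *\<^sub>R a + y *\<^sub>R b) \<le> x * H a + y * H b" by (rule H_convex_comb_le[OF xy(1,3)])
  also have "\<dots> = (x + y) * s" using a b by (simp add: tight_def distrib_right)
  finally have "H (x *\<^sub>R a + y *\<^sub>R b) \<le> s" using y by simp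
  then have "tight (x *\<^sub>R a + y *\<^sub>R b)" using margin_le[OF short] short unfolding tight_def by simp
  with that xy y show ?thesis by simp
qed

lemma tight_triangle_shrink:
  assumes a: "tight a1" "tight a2" "tight a3"
    and d: "0 \<le> det2 a2 a3" "0 \<le> det2 a3 a1" "2 \<le> det2 a1 a2"
  obtains b1 b2 b3 \<gamma> where "tight b1" "tight b2" "tight b3"
    "0 \<le> det2 b2 b3" "0 \<le> det2 b3 b1" "0 \<le> det2 b1 b2"
    "0 < \<gamma>" "\<gamma> < 1" "double_area b1 b2 b3 = \<gamma> * double_area a1 a2 a3"
proof -
  obtain x where x: "0 < x" "x < 1" and "tight (x *\<^sub>R a1 + (1 - x) *\<^sub>R a2)"
    using tight_on_segment[OF a(1,2) d(3)] .
  moreover define c where "c = x *\<^sub>R a1 + (1 - x) *\<^sub>R a2"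
  ultimately have c: "tight c" by simp
  have dets: "det2 a3 c = x * det2 a3 a1 - (1 - x) * det2 a2 a3" "det2 c a2 = x * det2 a1 a2"
    "det2 a1 c = (1 - x) * det2 a1 a2"
    unfolding c_def det2_add_left det2_add_right det2_scaleR_left det2_scaleR_right
    by (simp_all add: det2_self det2_swap[of a3 a2] algebra_simps)
  show ?thesis
  proof (cases "0 \<le> det2 a3 c")
    case True
    have "double_area c a2 a3 = x * double_area a1 a2 a3" using dets by (simp add: algebra_simps)
    then show ?thesis using that[of c a2 a3 x] True c a(2,3) d x dets by simp
  next
    case False
    have "0 \<le> det2 c a3" using False det2_swap[of a3 c] by simp
    moreover have "double_area a1 c a3 = (1 - x) * double_area a1 a2 a3"
      using dets det2_swap[of a3 c] by (simp add: algebra_simps)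
    ultimately show ?thesis using that[of a1 c a3 "1 - x"] c a(1,3) d x dets by simp
  qed
qed

lemma tight_zero_sum_if_opposite_pair: "tight u \<Longrightarrow> tight v \<Longrightarrow> u + v = 0 \<Longrightarrow> tight_zero_sum"
  unfolding tight_zero_sum_def by (metis add.commute eq_neg_iff_add_eq_0)

lemma tight_zero_sum_if_triple: "tight a \<Longrightarrow> tight b \<Longrightarrow> tight c \<Longrightarrow> a + b + c = 0 \<Longrightarrow> tight_zero_sum"
  unfolding tight_zero_sum_def by blast

lemma tight_zero_sum_if_unimodular:
  assumes a: "tight a1" "tight a2" "tight a3"
    and d: "det2 a2 a3 \<in> {0, 1}" "det2 a3 a1 \<in> {0, 1}" "det2 a1 a2 \<in> {0, 1}"
    and pos: "0 < double_area a1 a2 a3"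
  shows tight_zero_sum
proof -
  have cyclic: "det2 a2 a3 *\<^sub>R a1 + det2 a3 a1 *\<^sub>R a2 + det2 a1 a2 *\<^sub>R a3 = 0"
    by (rule det2_cyclic_sum)
  have "a1 \<noteq> 0" "a2 \<noteq> 0" "a3 \<noteq> 0" using a tight_nonzero by auto
  moreover have "det2 a2 a3 = 0 \<or> det2 a2 a3 = 1" "det2 a3 a1 = 0 \<or> det2 a3 a1 = 1"
    "det2 a1 a2 = 0 \<or> det2 a1 a2 = 1" using d by auto
  ultimately show ?thesis using cyclic pos
    by (elim disjE) (auto intro: tight_zero_sum_if_opposite_pair tight_zero_sum_if_triple a)
qed

text \<open>Descent on the doubled area of a tight triangle surrounding the origin: it is a positive
  integer, and \<open>tight_triangle_shrink\<close> lowers it until all three determinants are 0 or 1.\<close>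

lemma tight_zero_sum_if_surrounding:
  assumes "tight a1" "tight a2" "tight a3" "0 \<le> det2 a2 a3" "0 \<le> det2 a3 a1" "0 \<le> det2 a1 a2"
    and "0 < double_area a1 a2 a3"
  shows tight_zero_sum
  using assms
proof (induction "nat \<lfloor>double_area a1 a2 a3\<rfloor>" arbitrary: a1 a2 a3 rule: less_induct)
  case less
  have det_Ints: "det2 b c \<in> \<int>" if "tight b" "tight c" for b c
    using that by (simp add: det2_Ints tight_lattice_point)
  have shrink: tight_zero_sum
    if b: "tight b1" "tight b2" "tight b3" "0 \<le> det2 b2 b3" "0 \<le> det2 b3 b1" "0 \<le> det2 b1 b2"
      and \<gamma>: "0 < \<gamma>" "\<gamma> < 1" "double_area b1 b2 b3 = \<gamma> * double_area a1 a2 a3" for b1 b2 b3 \<gamma>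
  proof -
    have pos: "0 < double_area b1 b2 b3" and less: "double_area b1 b2 b3 < double_area a1 a2 a3"
      using \<gamma> less.prems(7) by simp_all
    obtain m n where "double_area b1 b2 b3 = of_int m" "double_area a1 a2 a3 = of_int n"
      using b less.prems(1-3) det_Ints by (meson Ints_add Ints_cases)
    with pos less have "nat \<lfloor>double_area b1 b2 b3\<rfloor> < nat \<lfloor>double_area a1 a2 a3\<rfloor>" by simp
    then show ?thesis using less.hyps b pos by blast
  qed
  have rotate: "double_area a2 a3 a1 = double_area a1 a2 a3" "double_area a3 a1 a2 = double_area a1 a2 a3"
    by simp_all
  consider "2 \<le> det2 a1 a2" | "2 \<le> det2 a2 a3" | "2 \<le> det2 a3 a1"
    | "det2 a2 a3 < 2" "det2 a3 a1 < 2" "det2 a1 a2 < 2" by linarith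
  then show ?case
  proof cases
    case 1
    from tight_triangle_shrink[OF less.prems(1-5) 1] show ?thesis by (metis shrink)
  next
    case 2
    from tight_triangle_shrink[OF less.prems(2,3,1) less.prems(5,6) 2] show ?thesis
      unfolding rotate by (metis shrink)
  next
    case 3
    from tight_triangle_shrink[OF less.prems(3,1,2) less.prems(6,4) 3] show ?thesis
      unfolding rotate by (metis shrink)
  next
    case 4
    have "x \<in> {0, 1}" if "x \<in> \<int>" "0 \<le> x" "x < 2" for x :: real
      using that by (elim Ints_cases) auto
    with 4 less.prems det_Ints show ?thesis
      by (intro tight_zero_sum_if_unimodular) simp_all
  qed
qed

lemma tight_zero_sum_if_antiparallel:
  assumes p: "tight p" and q: "tight q" and det: "det2 p q = 0" and neg: "p \<bullet> q < 0"
  shows tight_zero_sum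
proof -
  have "q \<noteq> 0" using q tight_nonzero by blast
  then have qq: "0 < q \<bullet> q" by simp
  have par: "(q \<bullet> q) *\<^sub>R p = (p \<bullet> q) *\<^sub>R q" using det by (rule det2_eq_0_imp_parallel)
  have "p = (1 / (q \<bullet> q)) *\<^sub>R ((q \<bullet> q) *\<^sub>R p)" using qq by simp
  also have "\<dots> = (p \<bullet> q / (q \<bullet> q)) *\<^sub>R q" unfolding par by simp
  finally have "p = (p \<bullet> q / (q \<bullet> q)) *\<^sub>R q" .
  moreover define t where "t = - (p \<bullet> q) / (q \<bullet> q)"
  ultimately have p_eq: "p = - (t *\<^sub>R q)" by simp
  have t: "0 < t" unfolding t_def using divide_neg_pos[OF neg qq] by simp
  show ?thesis
  proof (cases "t \<in> \<int>")
    case True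
    then obtain z where z: "t = of_int z" by (rule Ints_cases)
    with t have "0 < z" by simp
    with z consider "t = 1" | "2 \<le> t" by (cases "z = 1") auto
    then show ?thesis
    proof cases
      case 1
      then show ?thesis using p q p_eq tight_zero_sum_if_opposite_pair by simp
    next
      case 2
      have "s \<le> H (- q)" using q by (intro margin_le short_lattice_vector_uminus) (simp add: tight_def)
      have "2 * s \<le> t * s" using 2 margin_pos by (simp add: mult_right_mono)
      also have "\<dots> \<le> t * H (- q)" using \<open>s \<le> H (- q)\<close> t by (simp add: mult_left_mono)
      also have "t * H (- q) = H p" using H_scaleR[of t "- q"] t p_eq by simp
      finally show ?thesis using p margin_pos by (simp add: tight_def)
    qed
  next
    case False
    define x where "x = of_int \<lceil>t\<rceil> - t"
    have x: "0 < x" "x < 1" unfolding x_def using False by (auto intro: le_of_int_ceiling)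
      (metis Ints_of_int le_of_int_ceiling order_le_less, linarith)
    have "x *\<^sub>R q + 0 *\<^sub>R q = of_int \<lceil>t\<rceil> *\<^sub>R q + 1 *\<^sub>R p"
      unfolding x_def p_eq by (simp add: algebra_simps)
    also have "lattice_point \<dots>"
      using p q by (intro lattice_point_int_comb tight_lattice_point) auto
    finally show ?thesis
      using no_lattice_point_below_tight[OF q q, of x 0] x \<open>q \<noteq> 0\<close> by simp
  qed
qed

lemma tight_zero_sum_if_collinear:
  assumes tight: "tight a" "tight b" "tight c"
    and uvw: "0 \<le> u" "0 \<le> v" "0 \<le> w" "u + v + w = 1" and comb: "u *\<^sub>R a + v *\<^sub>R b + w *\<^sub>R c = 0"
    and dets: "det2 b c = 0" "det2 c a = 0" "det2 a b = 0"
  shows tight_zero_sum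
proof -
  have nz: "a \<noteq> 0" "b \<noteq> 0" "c \<noteq> 0" using tight tight_nonzero by auto
  have inner_comb: "u * (e \<bullet> a) + v * (e \<bullet> b) + w * (e \<bullet> c) = 0" for e
    using arg_cong[OF comb, of "inner e"] by (simp add: inner_add_right)
  show ?thesis
  proof (cases "u = 0")
    case False
    with uvw nz have "0 < u * (a \<bullet> a)" by simp
    have "a \<bullet> b < 0 \<or> a \<bullet> c < 0"
    proof (rule ccontr)
      assume "\<not> (a \<bullet> b < 0 \<or> a \<bullet> c < 0)"
      then have "0 \<le> v * (a \<bullet> b)" "0 \<le> w * (a \<bullet> c)" using uvw by simp_all
      with inner_comb[of a] \<open>0 < u * (a \<bullet> a)\<close> show False by linarith
    qed
    then show ?thesis
      using tight dets det2_swap[of a c] by (auto intro: tight_zero_sum_if_antiparallel)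
  next
    case True
    with uvw comb nz have "v \<noteq> 0" by auto
    with uvw nz have "0 < v * (b \<bullet> b)" by simp
    with inner_comb[of b] \<open>u = 0\<close> have "w * (b \<bullet> c) < 0" by simp
    with uvw have "b \<bullet> c < 0" by (simp add: mult_less_0_iff)
    then show ?thesis using tight dets by (auto intro: tight_zero_sum_if_antiparallel)
  qed
qed

lemma tight_zero_sum_if_zero_in_convex_hull:
  assumes A: "A \<subseteq> Collect tight" and zero: "0 \<in> convex hull A"
  shows tight_zero_sum
proof -
  obtain a b c u v w where abc: "a \<in> A" "b \<in> A" "c \<in> A"
    and uvw: "0 \<le> u" "0 \<le> v" "0 \<le> w" "u + v + w = 1"
    and comb: "u *\<^sub>R a + v *\<^sub>R b + w *\<^sub>R c = 0"
    by (rule convex_hull_planar_caratheodory[OF zero])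
  have tight: "tight a" "tight b" "tight c" using A abc by auto
  have det2_comb: "det2 (u *\<^sub>R a + v *\<^sub>R b + w *\<^sub>R c) e = u * det2 a e + v * det2 b e + w * det2 c e"
    "det2 e (u *\<^sub>R a + v *\<^sub>R b + w *\<^sub>R c) = u * det2 e a + v * det2 e b + w * det2 e c" for e
    by (simp_all add: det2_add_left det2_add_right det2_scaleR_left det2_scaleR_right)
  have "v * det2 b c = u * det2 c a" "v * det2 a b = w * det2 c a" "w * det2 b c = u * det2 a b"
    using det2_comb[of c] det2_comb[of a] det2_comb[of b]
    by (simp_all add: comb det2_zero_left det2_zero_right det2_self det2_swap[of a c]
        det2_swap[of b a] det2_swap[of c b])
  with uvw have same_sign: "(0 \<le> det2 b c \<and> 0 \<le> det2 c a \<and> 0 \<le> det2 a b) \<or>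
      (det2 b c \<le> 0 \<and> det2 c a \<le> 0 \<and> det2 a b \<le> 0)"
    by (rule same_sign_if_convex_weights)
  show ?thesis
  proof (cases "double_area a b c = 0")
    case False
    with same_sign consider "0 \<le> det2 b c" "0 \<le> det2 c a" "0 \<le> det2 a b" "0 < double_area a b c"
      | "0 \<le> det2 a c" "0 \<le> det2 c b" "0 \<le> det2 b a" "0 < double_area b a c"
      using det2_swap[of a c] det2_swap[of c b] det2_swap[of b a] by linarith
    then show ?thesis using tight by cases (auto intro: tight_zero_sum_if_surrounding)
  next
    case True
    with same_sign have "det2 b c = 0" "det2 c a = 0" "det2 a b = 0" by auto
    with tight uvw comb show ?thesis by (rule tight_zero_sum_if_collinear)
  qed
qed

end

section \<open>Optimal margins\<close>

definition feasible_margins :: "(real^'n \<Rightarrow> real) \<Rightarrow> (real^'n) set \<Rightarrow> real set" where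
  "feasible_margins h N = {s. \<exists>x. \<forall>a\<in>N. h a + s \<le> a \<bullet> x}"

lemma feasible_margins_antimono: "N \<subseteq> M \<Longrightarrow> feasible_margins h M \<subseteq> feasible_margins h N"
  unfolding feasible_margins_def by blast

lemma feasible_margins_le:
  assumes "s \<in> feasible_margins h N" "t \<le> s"
  shows "t \<in> feasible_margins h N"
proof -
  obtain x where "\<forall>a\<in>N. h a + s \<le> a \<bullet> x" using assms(1) unfolding feasible_margins_def by blast
  with assms(2) have "\<forall>a\<in>N. h a + t \<le> a \<bullet> x" by force
  then show ?thesis unfolding feasible_margins_def by blast
qed

lemma feasible_margins_short_if_lattice:
  "s \<in> feasible_margins h {a. lattice_point a \<and> a \<noteq> 0} \<Longrightarrow> s \<in> feasible_margins h {a. short_lattice_vector R a}"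
  by (rule subsetD[OF feasible_margins_antimono]) (auto simp: short_lattice_vector_def)

lemma fine_adjoint_nonempty_iff:
  "fine_adjoint P s \<noteq> {} \<longleftrightarrow> s \<in> feasible_margins (support_min P) {a. lattice_point a \<and> a \<noteq> 0}"
  unfolding fine_adjoint_def feasible_margins_def by auto

lemma fine_codegree_eq_inverse_max:
  assumes "0 < L" "L \<in> feasible_margins (support_min P) {a. lattice_point a \<and> a \<noteq> 0}"
    and "\<And>s. s \<in> feasible_margins (support_min P) {a. lattice_point a \<and> a \<noteq> 0} \<Longrightarrow> s \<le> L"
  shows "fine_codegree P = inverse L"
proof -
  have "Sup {s. s > 0 \<and> fine_adjoint P s \<noteq> {}} = L"
    using assms by (intro cSup_eq_maximum) (auto simp: fine_adjoint_nonempty_iff)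
  then show ?thesis unfolding fine_codegree_def by simp
qed

lemma feasible_point_in_cbox:
  assumes x: "\<forall>a\<in>N. h a + s \<le> a \<bullet> x" and "0 \<le> s"
    and units: "\<And>i. axis i 1 \<in> N" "\<And>i. - axis i 1 \<in> N"
  shows "x \<in> cbox (\<chi> i. h (axis i 1)) (\<chi> i. - h (- axis i 1))"
proof -
  have "h (axis i 1) \<le> x $ i \<and> x $ i \<le> - h (- axis i 1)" for i
    using x[rule_format, OF units(1)[of i]] x[rule_format, OF units(2)[of i]] \<open>0 \<le> s\<close>
    by (simp add: inner_axis')
  then show ?thesis by (simp add: mem_box_cart)
qed

lemma feasible_margins_bdd_above:
  assumes "axis i 1 \<in> N" "- axis i 1 \<in> N"
  shows "bdd_above (feasible_margins h N)"
proof (rule bdd_aboveI)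
  fix s assume "s \<in> feasible_margins h N"
  then obtain x where "\<forall>a\<in>N. h a + s \<le> a \<bullet> x" unfolding feasible_margins_def by blast
  then have "h (axis i 1) + s \<le> x $ i" "h (- axis i 1) + s \<le> - x $ i"
    using assms by (auto simp: inner_axis')
  then show "s \<le> - (h (axis i 1) + h (- axis i 1)) / 2" by simp
qed

lemma feasible_limit:
  fixes X :: "nat \<Rightarrow> 'a::euclidean_space"
  assumes "compact K" "\<And>n. X n \<in> K"
    and "\<And>a. a \<in> N \<Longrightarrow> eventually (\<lambda>n. h a + c n \<le> a \<bullet> X n) sequentially"
    and "c \<longlonglongrightarrow> c0"
  shows "\<exists>x. \<forall>a\<in>N. h a + c0 \<le> a \<bullet> x"
proof -
  obtain l r where r: "strict_mono r" and lim: "(X \<circ> r) \<longlonglongrightarrow> l"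
    using assms(1,2) compact_imp_seq_compact seq_compactE by metis
  have "h a + c0 \<le> a \<bullet> l" if "a \<in> N" for a
  proof (rule tendsto_le[OF sequentially_bot])
    show "(\<lambda>n. a \<bullet> (X \<circ> r) n) \<longlonglongrightarrow> a \<bullet> l" by (intro tendsto_intros lim)
    show "(\<lambda>n. h a + (c \<circ> r) n) \<longlonglongrightarrow> h a + c0"
      by (intro tendsto_intros LIMSEQ_subseq_LIMSEQ[OF assms(4) r])
    show "eventually (\<lambda>n. h a + (c \<circ> r) n \<le> a \<bullet> (X \<circ> r) n) sequentially"
      using eventually_subseq[OF r assms(3)[OF that]] by simp
  qed
  then show ?thesis by blast
qed

lemma Sup_feasible_margins_mem:
  fixes N :: "(real^'n) set"
  assumes units: "\<And>i. axis i 1 \<in> N" "\<And>i. - axis i 1 \<in> N"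
    and s0: "s0 \<in> feasible_margins h N" "0 \<le> s0"
  shows "Sup (feasible_margins h N) \<in> feasible_margins h N"
proof -
  define \<sigma> where "\<sigma> = Sup (feasible_margins h N)"
  define K :: "(real^'n) set" where "K = cbox (\<chi> i. h (axis i 1)) (\<chi> i. - h (- axis i 1))"
  have bdd: "bdd_above (feasible_margins h N)"
    using units by (intro feasible_margins_bdd_above) auto
  have "\<exists>x\<in>K. \<forall>a\<in>N. h a + (\<sigma> - inverse (Suc n)) \<le> a \<bullet> x" for n
  proof -
    obtain s where s: "s \<in> feasible_margins h N" "\<sigma> - inverse (Suc n) < s"
      using less_cSupE[of "\<sigma> - inverse (Suc n)" "feasible_margins h N"] s0 unfolding \<sigma>_def by auto
    obtain x where x: "\<forall>a\<in>N. h a + max s s0 \<le> a \<bullet> x"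
      using s(1) s0(1) unfolding feasible_margins_def by (cases "s \<le> s0") (auto simp: max_def)
    have "x \<in> K" unfolding K_def
      by (rule feasible_point_in_cbox[OF x _ units]) (use s0 in auto)
    moreover have "\<sigma> - inverse (Suc n) \<le> max s s0" using s(2) by linarith
    then have "\<forall>a\<in>N. h a + (\<sigma> - inverse (Suc n)) \<le> a \<bullet> x"
      using x by (meson add_left_mono order_trans)
    ultimately show ?thesis by blast
  qed
  then obtain X where "\<And>n. X n \<in> K" "\<And>n a. a \<in> N \<Longrightarrow> h a + (\<sigma> - inverse (Suc n)) \<le> a \<bullet> X n"
    by metis
  moreover have "(\<lambda>n. \<sigma> - inverse (Suc n)) \<longlonglongrightarrow> \<sigma> - 0"
    by (intro tendsto_intros LIMSEQ_inverse_real_of_nat)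
  ultimately have "\<exists>x. \<forall>a\<in>N. h a + (\<sigma> - 0) \<le> a \<bullet> x"
    by (intro feasible_limit[of K X]) (auto simp: K_def)
  then show ?thesis unfolding feasible_margins_def \<sigma>_def by simp
qed

lemma zero_in_convex_hull_if_not_separated:
  fixes A :: "'a::euclidean_space set"
  assumes "finite A" and not_separated: "\<And>v. \<exists>a\<in>A. a \<bullet> v \<le> 0"
  shows "0 \<in> convex hull A"
proof (rule ccontr)
  assume "0 \<notin> convex hull A"
  moreover have "closed (convex hull A)"
    using assms(1) by (simp add: compact_imp_closed finite_imp_compact_convex_hull)
  ultimately obtain v b where "0 < b" "\<forall>y\<in>convex hull A. b < v \<bullet> y"
    using separating_hyperplane_closed_0[OF convex_convex_hull] by blast
  moreover obtain a where "a \<in> A" "a \<bullet> v \<le> 0" using not_separated by blast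
  ultimately show False using hull_inc[of a A] by (fastforce simp: inner_commute)
qed

text \<open>At an optimal point the active constraints cannot all be improved by moving in one direction
  \<open>v\<close>, since the inactive ones stay slack for small steps; so 0 lies in the convex hull of the
  active constraint vectors.\<close>

lemma zero_in_convex_hull_active:
  fixes N :: "(real^'n) set" and h :: "real^'n \<Rightarrow> real"
  defines "\<sigma> \<equiv> Sup (feasible_margins h N)"
  assumes N: "finite N" "N \<noteq> {}" and bdd: "bdd_above (feasible_margins h N)"
    and x: "\<And>a. a \<in> N \<Longrightarrow> h a + \<sigma> \<le> a \<bullet> x"
  shows "0 \<in> convex hull {a\<in>N. a \<bullet> x - h a = \<sigma>}"
proof (rule zero_in_convex_hull_if_not_separated)
  show "finite {a\<in>N. a \<bullet> x - h a = \<sigma>}" using N(1) by simp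
  fix v
  show "\<exists>a\<in>{a\<in>N. a \<bullet> x - h a = \<sigma>}. a \<bullet> v \<le> 0"
  proof (rule ccontr)
    assume "\<not> ?thesis"
    then have improving: "0 < a \<bullet> v" if "a \<in> N" "a \<bullet> x - h a = \<sigma>" for a
      using that by force
    have slack: "eventually (\<lambda>t. \<sigma> < a \<bullet> (x + t *\<^sub>R v) - h a) (at_right 0)" if a: "a \<in> N" for a
    proof (cases "a \<bullet> x - h a = \<sigma>")
      case True
      then show ?thesis using improving[OF a True]
        by (auto simp: eventually_at_right_field inner_add_right intro!: exI[of _ 1])
    next
      case False
      with x[OF a] have "\<sigma> < a \<bullet> (x + 0 *\<^sub>R v) - h a" by simp
      moreover have "((\<lambda>t. a \<bullet> (x + t *\<^sub>R v) - h a) \<longlongrightarrow> a \<bullet> (x + 0 *\<^sub>R v) - h a) (at_right 0)"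
        by (intro tendsto_intros)
      ultimately show ?thesis by (rule order_tendstoD(1)[rotated])
    qed
    have "eventually (\<lambda>t. \<forall>a\<in>N. \<sigma> < a \<bullet> (x + t *\<^sub>R v) - h a) (at_right 0)"
      using N(1) slack by (intro eventually_ball_finite) auto
    then obtain t where t: "\<forall>a\<in>N. \<sigma> < a \<bullet> (x + t *\<^sub>R v) - h a"
      by (rule eventually_happens'[OF trivial_limit_at_right_real, THEN exE])
    define s where "s = Min ((\<lambda>a. a \<bullet> (x + t *\<^sub>R v) - h a) ` N)"
    have "\<sigma> < s" unfolding s_def using N t by simp
    moreover have "s \<in> feasible_margins h N"
      unfolding feasible_margins_def
    proof (intro CollectI exI[of _ "x + t *\<^sub>R v"] ballI)
      fix a assume "a \<in> N"
      then have "s \<le> a \<bullet> (x + t *\<^sub>R v) - h a" unfolding s_def using N(1) by simp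
      then show "h a + s \<le> a \<bullet> (x + t *\<^sub>R v)" by simp
    qed
    then have "s \<le> \<sigma>" unfolding \<sigma>_def using bdd by (rule cSup_upper)
    ultimately show False by simp
  qed
qed

text \<open>A full-dimensional polytope contains a ball around some \<open>x\<close>, and every nonzero lattice
  vector has norm at least 1, so \<open>x\<close> has a uniform positive margin.\<close>

lemma (in lattice_vertices) positive_feasible_margin:
  assumes "aff_dim (convex hull V) = CARD('n)"
  obtains r where "0 < r" "r \<in> feasible_margins (support_min (convex hull V)) {a. lattice_point a \<and> a \<noteq> 0}"
proof -
  have "affine hull (convex hull V) = UNIV" using assms aff_dim_eq_full[of "convex hull V"] by simp
  then have "rel_interior (convex hull V) = interior (convex hull V)" by (rule rel_interior_interior)
  moreover have "rel_interior (convex hull V) \<noteq> {}"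
    using vertices_nonempty by (simp add: rel_interior_eq_empty)
  ultimately obtain x r where r: "0 < r" "cball x r \<subseteq> convex hull V"
    using mem_interior_cball by (metis all_not_in_conv)
  have "support_min (convex hull V) a + r \<le> a \<bullet> x" if a: "lattice_point a" "a \<noteq> 0" for a
  proof -
    have "x - (r / norm a) *\<^sub>R a \<in> cball x r" using r(1) a(2) by (simp add: dist_norm)
    then have "support_min (convex hull V) a \<le> a \<bullet> (x - (r / norm a) *\<^sub>R a)"
      using r(2) support_min_le by blast
    also have "\<dots> = a \<bullet> x - r * norm a"
      using a(2) by (simp add: inner_diff_right dot_square_norm power2_eq_square)
    also have "\<dots> \<le> a \<bullet> x - r" using r(1) norm_ge_1_if_lattice_point[OF a] by simp
    finally show ?thesis by simp
  qed
  then show ?thesis using that r(1) unfolding feasible_margins_def by blast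
qed

lemma feasible_margin_lattice_if_short:
  assumes "0 \<le> L" and short: "\<And>n. L \<in> feasible_margins h {a :: real^'n. short_lattice_vector (Suc n) a}"
  shows "L \<in> feasible_margins h {a. lattice_point a \<and> a \<noteq> 0}"
proof -
  define K :: "(real^'n) set" where "K = cbox (\<chi> i. h (axis i 1)) (\<chi> i. - h (- axis i 1))"
  have "\<exists>x\<in>K. \<forall>a. short_lattice_vector (Suc n) a \<longrightarrow> h a + L \<le> a \<bullet> x" for n
  proof -
    obtain x where x: "\<forall>a\<in>{a. short_lattice_vector (Suc n) a}. h a + L \<le> a \<bullet> x"
      using short[of n] unfolding feasible_margins_def by blast
    have "x \<in> K" unfolding K_def
      by (rule feasible_point_in_cbox[OF x \<open>0 \<le> L\<close>]) (simp_all add: short_lattice_vector_axis)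
    with x show ?thesis by blast
  qed
  then obtain X where X: "\<And>n. X n \<in> K" "\<And>n a. short_lattice_vector (Suc n) a \<Longrightarrow> h a + L \<le> a \<bullet> X n"
    by metis
  have "eventually (\<lambda>n. h a + L \<le> a \<bullet> X n) sequentially" if a: "lattice_point a" "a \<noteq> 0" for a
  proof (rule eventually_mono[OF eventually_ge_at_top[of "nat \<lceil>norm a\<rceil>"]])
    fix n assume "nat \<lceil>norm a\<rceil> \<le> n"
    then have "\<bar>a $ i\<bar> \<le> Suc n" for i using component_le_norm_cart[of a i] by linarith
    with a show "h a + L \<le> a \<bullet> X n" by (intro X(2)) (simp add: short_lattice_vector_def)
  qed
  then have "\<exists>x. \<forall>a\<in>{a. lattice_point a \<and> a \<noteq> 0}. h a + L \<le> a \<bullet> x"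
    using X(1) by (intro feasible_limit[of K X _ _ "\<lambda>_. L"]) (auto simp: K_def)
  then show ?thesis unfolding feasible_margins_def by blast
qed

section \<open>The Fine codegree of a lattice polygon\<close>

lemma mem_fine_spectrum_2_iff:
  "m \<in> fine_spectrum TYPE(2) \<longleftrightarrow>
     (\<exists>V :: (real^2) set. lattice_vertices V \<and> aff_dim (convex hull V) = 2 \<and>
        m = fine_codegree (convex hull V))"
  unfolding fine_spectrum_def lattice_polytope_iff by auto

lemma decseq_eventually_const_if_Ints:
  fixes f :: "nat \<Rightarrow> real"
  assumes "decseq f" "\<And>n. 0 \<le> f n" "0 < c" "\<And>n. c * f n \<in> \<int>"
  obtains N where "\<And>n. N \<le> n \<Longrightarrow> f n = f N"
proof -
  obtain N where N: "\<And>n. nat \<lfloor>c * f N\<rfloor> \<le> nat \<lfloor>c * f n\<rfloor>"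
    using ex_has_least_nat[of "\<lambda>_. True" 0 "\<lambda>n. nat \<lfloor>c * f n\<rfloor>"] by auto
  have "f N \<le> f n" for n
  proof -
    obtain k m where k: "c * f N = of_int k" and m: "c * f n = of_int m"
      using assms(4) by (meson Ints_cases)
    have "0 \<le> c * f N" "0 \<le> c * f n" using assms(2,3) by simp_all
    with k m have "0 \<le> k" "0 \<le> m" by simp_all
    with N[of n] k m have "c * f N \<le> c * f n" by simp
    with assms(3) show ?thesis by simp
  qed
  with assms(1) have "\<And>n. N \<le> n \<Longrightarrow> f n = f N" by (simp add: antisym decseqD)
  then show ?thesis by (rule that)
qed

lemma Sup_feasible_margins_short_Ints:
  fixes V :: "(real^2) set"
  assumes "lattice_vertices V" "1 \<le> R"
    and s0: "s0 \<in> feasible_margins (support_min (convex hull V)) {a. short_lattice_vector R a}" "0 < s0"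
  defines "\<sigma> \<equiv> Sup (feasible_margins (support_min (convex hull V)) {a. short_lattice_vector R a})"
  shows "2 * \<sigma> \<in> \<int> \<or> 3 * \<sigma> \<in> \<int>"
proof -
  interpret lattice_vertices V by fact
  define h where "h = support_min (convex hull V)"
  define N where "N = {a :: real^2. short_lattice_vector R a}"
  have units: "axis i 1 \<in> N" "- axis i 1 \<in> N" for i
    unfolding N_def using short_lattice_vector_axis[OF assms(2)] by auto
  have bdd: "bdd_above (feasible_margins h N)" using units by (rule feasible_margins_bdd_above)
  have "\<sigma> \<in> feasible_margins h N"
    unfolding \<sigma>_def h_def N_def using s0 units
    by (intro Sup_feasible_margins_mem) (auto simp: h_def N_def)
  then obtain x where x: "\<And>a. a \<in> N \<Longrightarrow> h a + \<sigma> \<le> a \<bullet> x"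
    unfolding feasible_margins_def by blast
  have "s0 \<le> \<sigma>" unfolding \<sigma>_def using cSup_upper[OF _ bdd] s0(1) by (simp add: h_def N_def)
  with s0(2) have \<sigma>_pos: "0 < \<sigma>" by simp
  interpret planar_sublinear "\<lambda>a. a \<bullet> x - h a" \<sigma> R
  proof
    show "(t *\<^sub>R a) \<bullet> x - h (t *\<^sub>R a) = t * (a \<bullet> x - h a)" if "0 \<le> t" for t a
      using support_min_scaleR[OF that] by (simp add: h_def algebra_simps)
    show "(a + b) \<bullet> x - h (a + b) \<le> (a \<bullet> x - h a) + (b \<bullet> x - h b)" for a b
      using support_min_add[of a b] by (simp add: h_def inner_add_left)
    show "0 < \<sigma>" by (rule \<sigma>_pos)
    show "\<sigma> \<le> a \<bullet> x - h a" if "short_lattice_vector R a" for a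
      using x[of a] that by (simp add: N_def)
  qed
  have "0 \<in> convex hull {a\<in>N. a \<bullet> x - h a = \<sigma>}"
    using zero_in_convex_hull_active[where N = N and h = h and x = x] finite_short_lattice_vectors units bdd x
    unfolding \<sigma>_def h_def N_def by blast
  moreover have "{a\<in>N. a \<bullet> x - h a = \<sigma>} \<subseteq> Collect tight" unfolding tight_def N_def by auto
  ultimately have tight_zero_sum by (intro tight_zero_sum_if_zero_in_convex_hull)
  have h_Ints: "h a \<in> \<int>" if "tight a" for a
    using that support_min_Ints tight_lattice_point unfolding h_def by blast
  show ?thesis using \<open>tight_zero_sum\<close> unfolding tight_zero_sum_def
  proof (elim disjE exE conjE)
    fix u assume "tight u" "tight (- u)"
    then have "2 * \<sigma> = - (h u + h (- u))" by (simp add: tight_def)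
    then show ?thesis using h_Ints \<open>tight u\<close> \<open>tight (- u)\<close> by (metis Ints_add Ints_minus)
  next
    fix a b c assume "tight a" "tight b" "tight c" "a + b + c = 0"
    then have "3 * \<sigma> = (a \<bullet> x - h a) + (b \<bullet> x - h b) + (c \<bullet> x - h c)" by (simp add: tight_def)
    also have "\<dots> = (a + b + c) \<bullet> x - (h a + h b + h c)" by (simp add: inner_add_left)
    finally have "3 * \<sigma> = - (h a + h b + h c)" using \<open>a + b + c = 0\<close> by simp
    then show ?thesis using h_Ints \<open>tight a\<close> \<open>tight b\<close> \<open>tight c\<close> by (metis Ints_add Ints_minus)
  qed
qed

text \<open>The box side is \<open>Suc n\<close> so that the unit vectors are always among the short vectors.\<close>

definition short_margin :: "(real^'n \<Rightarrow> real) \<Rightarrow> nat \<Rightarrow> real" where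
  "short_margin h n = Sup (feasible_margins h {a. short_lattice_vector (Suc n) a})"

lemma
  assumes "0 \<le> r" "r \<in> feasible_margins h {a :: real^'n. lattice_point a \<and> a \<noteq> 0}"
  shows short_margin_mem: "short_margin h n \<in> feasible_margins h {a. short_lattice_vector (Suc n) a}"
    and short_margin_ge: "r \<le> short_margin h n"
    and short_margin_upper:
      "s \<in> feasible_margins h {a. lattice_point a \<and> a \<noteq> 0} \<Longrightarrow> s \<le> short_margin h n"
    and decseq_short_margin: "decseq (short_margin h)"
proof -
  define N where "N n = {a :: real^'n. short_lattice_vector (Suc n) a}" for n
  have units: "axis i 1 \<in> N n" "- axis i 1 \<in> N n" for i n
    unfolding N_def by (simp_all add: short_lattice_vector_axis)
  then have bdd: "bdd_above (feasible_margins h (N n))" for n by (rule feasible_margins_bdd_above)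
  have to_N: "feasible_margins h {a. lattice_point a \<and> a \<noteq> 0} \<subseteq> feasible_margins h (N n)" for n
    unfolding N_def using feasible_margins_short_if_lattice by blast
  then have r_N: "r \<in> feasible_margins h (N n)" for n using assms(2) by blast
  show "short_margin h n \<in> feasible_margins h {a. short_lattice_vector (Suc n) a}"
    using Sup_feasible_margins_mem[OF units r_N assms(1)] unfolding short_margin_def N_def .
  show "r \<le> short_margin h n"
    unfolding short_margin_def N_def[symmetric] using r_N bdd by (rule cSup_upper)
  show "s \<le> short_margin h n" if "s \<in> feasible_margins h {a. lattice_point a \<and> a \<noteq> 0}"
    unfolding short_margin_def N_def[symmetric] using that to_N by (intro cSup_upper[OF _ bdd]) blast
  have "N n \<subseteq> N (Suc n)" for n
    unfolding N_def by (auto elim: short_lattice_vector_mono)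
  then show "decseq (short_margin h)"
    unfolding short_margin_def N_def[symmetric] using r_N
    by (intro decseq_SucI cSup_subset_mono bdd feasible_margins_antimono) auto
qed

lemma fine_codegree_eq_inverse_short_margin:
  fixes P :: "(real^'n) set"
  assumes r: "0 < r" "r \<in> feasible_margins (support_min P) {a. lattice_point a \<and> a \<noteq> 0}"
    and stable: "\<And>n. n0 \<le> n \<Longrightarrow> short_margin (support_min P) n = short_margin (support_min P) n0"
  shows "fine_codegree P = inverse (short_margin (support_min P) n0)"
proof (rule fine_codegree_eq_inverse_max)
  let ?L = "short_margin (support_min P) n0"
  have r_le: "r \<le> short_margin (support_min P) n" for n
    using short_margin_ge[OF _ r(2)] r(1) by simp
  have "?L \<le> short_margin (support_min P) n" for n
  proof (cases "n0 \<le> n")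
    case True
    then show ?thesis using stable[OF True] by simp
  next
    case False
    then show ?thesis using decseq_short_margin[OF _ r(2)] r(1) by (simp add: decseqD)
  qed
  then have "?L \<in> feasible_margins (support_min P) {a. short_lattice_vector (Suc n) a}" for n
    using feasible_margins_le[OF short_margin_mem[OF less_imp_le[OF r(1)] r(2)]] by blast
  moreover have "0 \<le> ?L" using r_le[of n0] r(1) by simp
  ultimately show "?L \<in> feasible_margins (support_min P) {a. lattice_point a \<and> a \<noteq> 0}"
    by (intro feasible_margin_lattice_if_short)
  show "0 < ?L" using r_le[of n0] r(1) by simp
  show "s \<le> ?L" if "s \<in> feasible_margins (support_min P) {a. lattice_point a \<and> a \<noteq> 0}" for s
    using short_margin_upper[OF _ r(2) that] r(1) by simp
qed

lemma fine_codegree_lattice_polygon: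
  fixes V :: "(real^2) set"
  assumes "lattice_vertices V" and full: "aff_dim (convex hull V) = 2"
  obtains k :: nat where "0 < k" "fine_codegree (convex hull V) \<in> {2 / k, 3 / k}"
proof -
  interpret lattice_vertices V by fact
  define h where "h = support_min (convex hull V)"
  obtain r where r: "0 < r" "r \<in> feasible_margins h {a. lattice_point a \<and> a \<noteq> 0}"
    using positive_feasible_margin full unfolding h_def by auto
  have "r \<in> feasible_margins h {a. short_lattice_vector (Suc n) a}" for n
    using r(2) by (rule feasible_margins_short_if_lattice)
  then have margin_Ints: "2 * short_margin h n \<in> \<int> \<or> 3 * short_margin h n \<in> \<int>" for n
    unfolding short_margin_def h_def
    using Sup_feasible_margins_short_Ints[OF assms(1) _ _ r(1)] by simp
  have six_Ints: "6 * short_margin h n \<in> \<int>" for n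
  proof -
    have "6 * short_margin h n = 3 * (2 * short_margin h n)" "6 * short_margin h n = 2 * (3 * short_margin h n)"
      by simp_all
    then show ?thesis using margin_Ints[of n] by (metis Ints_mult Ints_numeral)
  qed
  have nonneg: "0 \<le> short_margin h n" for n using short_margin_ge[OF _ r(2), of n] r(1) by simp
  obtain n0 where "\<And>n. n0 \<le> n \<Longrightarrow> short_margin h n = short_margin h n0"
    using decseq_eventually_const_if_Ints[OF decseq_short_margin[OF less_imp_le[OF r(1)] r(2)] nonneg
        zero_less_numeral six_Ints] by blast
  then have codegree: "fine_codegree (convex hull V) = inverse (short_margin h n0)"
    unfolding h_def by (rule fine_codegree_eq_inverse_short_margin[OF r[unfolded h_def]])
  define L where "L = short_margin h n0"
  have L_pos: "0 < L" using short_margin_ge[OF _ r(2), of n0] r(1) unfolding L_def by simp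
  obtain d :: nat where d: "d = 2 \<or> d = 3" "real d * L \<in> \<int>"
    using margin_Ints[of n0] unfolding L_def by (metis of_nat_numeral)
  from d(2) obtain k where k: "real d * L = of_int k" by (rule Ints_cases)
  have "0 < real d * L" using d L_pos by auto
  with k have "0 < k" by simp
  have "inverse L = real d / real (nat k)" using k \<open>0 < k\<close> L_pos by (simp add: field_simps)
  then show ?thesis using that[of "nat k"] codegree d \<open>0 < k\<close> unfolding L_def by auto
qed

section \<open>Triangles and squares\<close>

definition triangle_vertices :: "nat \<Rightarrow> (real^2) set" where
  "triangle_vertices k = {0, vector [real k, 0], vector [0, real k]}"

definition square_vertices :: "nat \<Rightarrow> (real^2) set" where
  "square_vertices k = {0, vector [real k, 0], vector [0, real k], vector [real k, real k]}"

lemma lattice_vertices_triangle: "lattice_vertices (triangle_vertices k)"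
  and lattice_vertices_square: "lattice_vertices (square_vertices k)"
  by unfold_locales (auto simp: triangle_vertices_def square_vertices_def lattice_point_vec2)

lemma aff_dim_triangle:
  assumes "0 < k"
  shows "aff_dim (convex hull (triangle_vertices k)) = 2"
proof -
  have "y \<in> affine hull (triangle_vertices k)" for y :: "real^2"
  proof -
    have "y = (1 - y$1 / k - y$2 / k) *\<^sub>R 0 + (y$1 / k) *\<^sub>R vector [real k, 0] + (y$2 / k) *\<^sub>R vector [0, real k]"
      using assms by (simp add: vec2_eq_iff)
    then show ?thesis unfolding triangle_vertices_def affine_hull_3
      by (intro CollectI exI conjI) (assumption, simp)
  qed
  then have "affine hull (triangle_vertices k) = UNIV" by auto
  then show ?thesis using aff_dim_eq_full[of "triangle_vertices k"] by (simp add: aff_dim_convex_hull)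
qed

lemma aff_dim_square:
  assumes "0 < k"
  shows "aff_dim (convex hull (square_vertices k)) = 2"
proof -
  have "triangle_vertices k \<subseteq> square_vertices k" by (auto simp: triangle_vertices_def square_vertices_def)
  then have "2 \<le> aff_dim (convex hull (square_vertices k))"
    using aff_dim_subset aff_dim_triangle[OF assms] by (metis aff_dim_convex_hull)
  moreover have "aff_dim (convex hull (square_vertices k)) \<le> 2"
    using aff_dim_le_DIM[of "convex hull (square_vertices k)"] by simp
  ultimately show ?thesis by simp
qed

lemma triangle_feasible_margin:
  "real k / 3 \<in>
     feasible_margins (support_min (convex hull (triangle_vertices k))) {a. lattice_point a \<and> a \<noteq> 0}"
proof -
  interpret lattice_vertices "triangle_vertices k" by (rule lattice_vertices_triangle)
  define h where "h = support_min (convex hull (triangle_vertices k))"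
  have vertices: "0 \<in> triangle_vertices k" "vector [real k, 0] \<in> triangle_vertices k"
    "vector [0, real k] \<in> triangle_vertices k" by (simp_all add: triangle_vertices_def)
  have "h a + k / 3 \<le> a \<bullet> vector [k / 3, k / 3]" if a: "lattice_point a" "a \<noteq> 0" for a
  proof -
    obtain m1 m2 :: int where m: "a$1 = m1" "a$2 = m2" "m1 \<noteq> 0 \<or> m2 \<noteq> 0"
      using nonzero_lattice_point_vec2E[OF a] .
    have h: "h a \<le> 0" "h a \<le> m1 * k" "h a \<le> m2 * k"
      using support_min_le_vertex[OF vertices(1), of a] support_min_le_vertex[OF vertices(2), of a]
        support_min_le_vertex[OF vertices(3), of a] by (simp_all add: h_def inner_vec2 m)
    from m(3) consider "1 \<le> m1 + m2" | "1 \<le> m2 - 2 * m1" | "1 \<le> m1 - 2 * m2" by linarith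
    then show ?thesis
    proof cases
      case 1
      with h(1) mult_left_mono[of 1 "real_of_int (m1 + m2)" k] show ?thesis
        by (simp add: inner_vec2 m algebra_simps)
    next
      case 2
      with h(2) mult_left_mono[of 1 "real_of_int (m2 - 2 * m1)" k] show ?thesis
        by (simp add: inner_vec2 m algebra_simps)
    next
      case 3
      with h(3) mult_left_mono[of 1 "real_of_int (m1 - 2 * m2)" k] show ?thesis
        by (simp add: inner_vec2 m algebra_simps)
    qed
  qed
  then show ?thesis unfolding feasible_margins_def h_def by blast
qed

lemma triangle_feasible_margin_le:
  assumes s: "s \<in>
    feasible_margins (support_min (convex hull (triangle_vertices k))) {a. lattice_point a \<and> a \<noteq> 0}"
  shows "s \<le> real k / 3"
proof -
  interpret lattice_vertices "triangle_vertices k" by (rule lattice_vertices_triangle)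
  define h where "h = support_min (convex hull (triangle_vertices k))"
  obtain y where y: "\<And>a. lattice_point a \<Longrightarrow> a \<noteq> 0 \<Longrightarrow> h a + s \<le> a \<bullet> y"
    using s unfolding feasible_margins_def h_def by blast
  have "0 \<le> h (vector [1, 0])" "0 \<le> h (vector [0, 1])" "- real k \<le> h (vector [-1, -1])"
    unfolding h_def by (intro support_min_ge; auto simp: triangle_vertices_def inner_vec2)+
  moreover have "h (vector [1, 0]) + s \<le> y$1" "h (vector [0, 1]) + s \<le> y$2"
    "h (vector [-1, -1]) + s \<le> - y$1 - y$2"
    using y[of "vector [1, 0]"] y[of "vector [0, 1]"] y[of "vector [-1, -1]"]
    by (simp_all add: lattice_point_vec2 vec2_eq_iff inner_vec2)
  ultimately show ?thesis by linarith
qed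

lemma fine_codegree_triangle:
  assumes "0 < k"
  shows "fine_codegree (convex hull (triangle_vertices k)) = 3 / k"
proof -
  have "fine_codegree (convex hull (triangle_vertices k)) = inverse (real k / 3)"
    using assms triangle_feasible_margin triangle_feasible_margin_le
    by (intro fine_codegree_eq_inverse_max) auto
  then show ?thesis by simp
qed

lemma square_feasible_margin:
  "real k / 2 \<in>
     feasible_margins (support_min (convex hull (square_vertices k))) {a. lattice_point a \<and> a \<noteq> 0}"
proof -
  interpret lattice_vertices "square_vertices k" by (rule lattice_vertices_square)
  define h where "h = support_min (convex hull (square_vertices k))"
  have vertices: "0 \<in> square_vertices k" "vector [real k, 0] \<in> square_vertices k"
    "vector [0, real k] \<in> square_vertices k" "vector [real k, real k] \<in> square_vertices k"
    by (simp_all add: square_vertices_def)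
  have "h a + k / 2 \<le> a \<bullet> vector [k / 2, k / 2]" if a: "lattice_point a" "a \<noteq> 0" for a
  proof -
    obtain m1 m2 :: int where m: "a$1 = m1" "a$2 = m2" "m1 \<noteq> 0 \<or> m2 \<noteq> 0"
      using nonzero_lattice_point_vec2E[OF a] .
    have h: "h a \<le> 0" "h a \<le> m1 * k" "h a \<le> m2 * k" "h a \<le> m1 * k + m2 * k"
      using support_min_le_vertex[OF vertices(1), of a] support_min_le_vertex[OF vertices(2), of a]
        support_min_le_vertex[OF vertices(3), of a] support_min_le_vertex[OF vertices(4), of a]
      by (simp_all add: h_def inner_vec2 m)
    from m(3) consider "1 \<le> m1 + m2" | "1 \<le> m2 - m1" | "1 \<le> m1 - m2" | "1 \<le> - m1 - m2"
      by linarith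
    then show ?thesis
    proof cases
      case 1
      with h(1) mult_left_mono[of 1 "real_of_int (m1 + m2)" k] show ?thesis
        by (simp add: inner_vec2 m algebra_simps)
    next
      case 2
      with h(2) mult_left_mono[of 1 "real_of_int (m2 - m1)" k] show ?thesis
        by (simp add: inner_vec2 m algebra_simps)
    next
      case 3
      with h(3) mult_left_mono[of 1 "real_of_int (m1 - m2)" k] show ?thesis
        by (simp add: inner_vec2 m algebra_simps)
    next
      case 4
      with h(4) mult_left_mono[of 1 "real_of_int (- m1 - m2)" k] show ?thesis
        by (simp add: inner_vec2 m algebra_simps)
    qed
  qed
  then show ?thesis unfolding feasible_margins_def h_def by blast
qed

lemma square_feasible_margin_le:
  assumes s: "s \<in>
    feasible_margins (support_min (convex hull (square_vertices k))) {a. lattice_point a \<and> a \<noteq> 0}"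
  shows "s \<le> real k / 2"
proof -
  interpret lattice_vertices "square_vertices k" by (rule lattice_vertices_square)
  define h where "h = support_min (convex hull (square_vertices k))"
  obtain y where y: "\<And>a. lattice_point a \<Longrightarrow> a \<noteq> 0 \<Longrightarrow> h a + s \<le> a \<bullet> y"
    using s unfolding feasible_margins_def h_def by blast
  have "0 \<le> h (vector [1, 0])" "- real k \<le> h (vector [-1, 0])"
    unfolding h_def by (intro support_min_ge; auto simp: square_vertices_def inner_vec2)+
  moreover have "h (vector [1, 0]) + s \<le> y$1" "h (vector [-1, 0]) + s \<le> - y$1"
    using y[of "vector [1, 0]"] y[of "vector [-1, 0]"]
    by (simp_all add: lattice_point_vec2 vec2_eq_iff inner_vec2)
  ultimately show ?thesis by linarith
qed

lemma fine_codegree_square: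
  assumes "0 < k"
  shows "fine_codegree (convex hull (square_vertices k)) = 2 / k"
proof -
  have "fine_codegree (convex hull (square_vertices k)) = inverse (real k / 2)"
    using assms square_feasible_margin square_feasible_margin_le
    by (intro fine_codegree_eq_inverse_max) auto
  then show ?thesis by simp
qed

theorem mainTheorem6:
  shows "fine_spectrum TYPE(2) =
           {2 / real k | k :: nat. k > 0} \<union> {3 / real k | k :: nat. k > 0}"
proof (intro equalityI subsetI)
  fix m assume "m \<in> fine_spectrum TYPE(2)"
  then obtain V :: "(real^2) set" where V: "lattice_vertices V" "aff_dim (convex hull V) = 2"
    and m: "m = fine_codegree (convex hull V)"
    unfolding mem_fine_spectrum_2_iff by blast
  obtain k :: nat where "0 < k" "m \<in> {2 / k, 3 / k}"
    using fine_codegree_lattice_polygon[OF V] unfolding m by blast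
  then show "m \<in> {2 / real k | k :: nat. k > 0} \<union> {3 / real k | k :: nat. k > 0}" by blast
next
  fix m assume "m \<in> {2 / real k | k :: nat. k > 0} \<union> {3 / real k | k :: nat. k > 0}"
  then obtain k :: nat where k: "0 < k" and "m = 2 / k \<or> m = 3 / k" by blast
  with fine_codegree_square fine_codegree_triangle consider
    "m = fine_codegree (convex hull (square_vertices k))"
    | "m = fine_codegree (convex hull (triangle_vertices k))" by auto
  then show "m \<in> fine_spectrum TYPE(2)" unfolding mem_fine_spectrum_2_iff
    using k lattice_vertices_square aff_dim_square lattice_vertices_triangle aff_dim_triangle
    by cases blast+
qed

end
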